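(* For every NFA $\mathcal A$, the relation $S(\subseteq^{\mathrm{bw}},\supseteq^{\mathrm{bw}})$ is good for saturation, i.e. $\mathcal L(\mathrm{Sat}(\mathcal A,S(\subseteq^{\mathrm{bw}},\supseteq^{\mathrm{bw}})))=\mathcal L(\mathcal A)$.
   Context: An NFA $\mathcal A=(\Sigma,Q,I,F,\delta)$, $\delta\subseteq Q\times\Sigma\times Q$; its language is the set of finite words with a finite trace starting in $I$ and ending in $F$. Backward finite trace inclusion: $p\subseteq^{\mathrm{bw}}q$ iff for every finite word $w$, if some $w$-trace starting in $I$ ends in $p$, then some $w$-trace starting in $I$ ends in $q$; $\supseteq^{\mathrm{bw}}$ is its inverse. Let $\Delta=Q\times\Sigma\times Q$; $S(R_b,R_f)=\{((p,\sigma,r),(p',\sigma,r'))\in\Delta\times\Delta:p\,R_b\,p',\ r\,R_f\,r'\}$. For reflexive $S\subseteq\Delta\times\Delta$, $\mathrm{Sat}(\mathcal A,S)=(\Sigma,Q,I,F,\{t'\in\Delta:\exists t\in\delta,(t',t)\in S\})$. *)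

theory Defs
  imports Main
begin

record ('s, 'q) nfa =
  alph :: "'s set"
  states :: "'q set"
  init :: "'q set"
  final :: "'q set"
  trans :: "('q \<times> 's \<times> 'q) set"

definition wf_nfa :: "('s, 'q) nfa \<Rightarrow> bool" where
  "wf_nfa A \<longleftrightarrow> finite (alph A) \<and> finite (states A) \<and> init A \<subseteq> states A
     \<and> final A \<subseteq> states A \<and> trans A \<subseteq> states A \<times> alph A \<times> states A"

inductive run :: "('q \<times> 's \<times> 'q) set \<Rightarrow> 'q \<Rightarrow> 's list \<Rightarrow> 'q \<Rightarrow> bool" for d where
  run_nil: "run d p [] p"
| run_cons: "(p, a, r) \<in> d \<Longrightarrow> run d r w q \<Longrightarrow> run d p (a # w) q"

definition lang :: "('s, 'q) nfa \<Rightarrow> 's list set" where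
  "lang A = {w. set w \<subseteq> alph A \<and> (\<exists>i\<in>init A. \<exists>f\<in>final A. run (trans A) i w f)}"

definition Delta :: "('s, 'q) nfa \<Rightarrow> ('q \<times> 's \<times> 'q) set" where
  "Delta A = states A \<times> alph A \<times> states A"

definition bw_incl :: "('s, 'q) nfa \<Rightarrow> ('q \<times> 'q) set" where
  "bw_incl A = {(p, q). p \<in> states A \<and> q \<in> states A \<and>
     (\<forall>w. (\<exists>i\<in>init A. run (trans A) i w p) \<longrightarrow> (\<exists>i\<in>init A. run (trans A) i w q))}"

definition S_rel :: "('s, 'q) nfa \<Rightarrow> ('q \<times> 'q) set \<Rightarrow> ('q \<times> 'q) set
    \<Rightarrow> (('q \<times> 's \<times> 'q) \<times> ('q \<times> 's \<times> 'q)) set" where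
  "S_rel A Rb Rf = {((p, a, r), (p', a', r')). (p, a, r) \<in> Delta A \<and> (p', a', r') \<in> Delta A
      \<and> a = a' \<and> (p, p') \<in> Rb \<and> (r, r') \<in> Rf}"

definition Sat :: "('s, 'q) nfa \<Rightarrow> (('q \<times> 's \<times> 'q) \<times> ('q \<times> 's \<times> 'q)) set \<Rightarrow> ('s, 'q) nfa" where
  "Sat A S = A\<lparr>trans := {t' \<in> Delta A. \<exists>t\<in>trans A. (t', t) \<in> S}\<rparr>"

end

theory Submission
  imports Defs
begin

text \<open>A saturated transition (p, a, r) stems from some (p', a, r') of the automaton with
  p \<subseteq>bw p' and r' \<subseteq>bw r. Every word reaching p from an initial state therefore reaches p',
  extends by a to a word reaching r', and thus reaches r: saturation creates no new
  backward-reachability, and in particular no new accepting runs. Conversely the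
  relation is reflexive, so saturation keeps all original transitions.\<close>

lemma run_snoc: "run d i u p \<Longrightarrow> (p, a, r) \<in> d \<Longrightarrow> run d i (u @ [a]) r"
  by (induction rule: run.induct) (auto intro: run.intros)

lemma run_mono: "run d p w q \<Longrightarrow> d \<subseteq> d' \<Longrightarrow> run d' p w q"
  by (induction rule: run.induct) (auto intro: run.intros)

definition reachable_by :: "('s, 'q) nfa \<Rightarrow> 's list \<Rightarrow> 'q \<Rightarrow> bool" where
  "reachable_by A w q \<longleftrightarrow> (\<exists>i\<in>init A. run (trans A) i w q)"

lemma reachable_by_snoc:
  "reachable_by A u p \<Longrightarrow> (p, a, r) \<in> trans A \<Longrightarrow> reachable_by A (u @ [a]) r"
  unfolding reachable_by_def using run_snoc by metis

lemma bw_incl_reachable_by: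
  "(p, q) \<in> bw_incl A \<Longrightarrow> reachable_by A w p \<Longrightarrow> reachable_by A w q"
  unfolding bw_incl_def reachable_by_def by blast

lemma refl_on_bw_incl: "refl_on (states A) (bw_incl A)"
  unfolding refl_on_def bw_incl_def by blast

lemma refl_on_S_rel:
  assumes "refl_on (states A) Rb" and "refl_on (states A) Rf"
  shows "refl_on (Delta A) (S_rel A Rb Rf)"
  using assms unfolding refl_on_def S_rel_def Delta_def by blast

lemma trans_subset_Sat:
  assumes "trans A \<subseteq> Delta A" and "refl_on (Delta A) S"
  shows "trans A \<subseteq> trans (Sat A S)"
  using assms unfolding Sat_def refl_on_def by auto

lemma lang_subset_Sat:
  assumes "trans A \<subseteq> Delta A" and "refl_on (Delta A) S"
  shows "lang A \<subseteq> lang (Sat A S)"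
  using run_mono[OF _ trans_subset_Sat[OF assms]] unfolding lang_def by (simp add: Sat_def) blast

lemma reachable_by_Sat_step:
  assumes "Rb \<subseteq> bw_incl A" and "Rf \<subseteq> bw_incl A"
    and "(p, a, r) \<in> trans (Sat A (S_rel A Rb (converse Rf)))"
    and "reachable_by A u p"
  shows "reachable_by A (u @ [a]) r"
proof -
  from assms(3) obtain p' r' where "(p', a, r') \<in> trans A"
    and "(p, p') \<in> Rb" and "(r', r) \<in> Rf"
    unfolding Sat_def S_rel_def by auto
  with assms show ?thesis
    by (meson bw_incl_reachable_by reachable_by_snoc subsetD)
qed

lemma reachable_by_Sat_run:
  assumes "Rb \<subseteq> bw_incl A" and "Rf \<subseteq> bw_incl A"
    and "run (trans (Sat A (S_rel A Rb (converse Rf)))) p w q"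
  shows "reachable_by A u p \<Longrightarrow> reachable_by A (u @ w) q"
  using assms(3)
proof (induction arbitrary: u rule: run.induct)
  case (run_cons p a r w q)
  then have "reachable_by A (u @ [a]) r"
    using reachable_by_Sat_step[OF assms(1,2)] by blast
  with run_cons.IH show ?case by fastforce
qed simp

lemma lang_Sat_subset:
  assumes "Rb \<subseteq> bw_incl A" and "Rf \<subseteq> bw_incl A"
  shows "lang (Sat A (S_rel A Rb (converse Rf))) \<subseteq> lang A"
proof
  fix w assume "w \<in> lang (Sat A (S_rel A Rb (converse Rf)))"
  then obtain i f where "set w \<subseteq> alph A" "i \<in> init A" "f \<in> final A"
    and "run (trans (Sat A (S_rel A Rb (converse Rf)))) i w f"
    unfolding lang_def Sat_def by auto
  moreover have "reachable_by A [] i"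
    using \<open>i \<in> init A\<close> unfolding reachable_by_def by (auto intro: run_nil)
  ultimately show "w \<in> lang A"
    using reachable_by_Sat_run[OF assms, of i w f "[]"]
    unfolding lang_def reachable_by_def by auto
qed

theorem theorem10p8:
  fixes A :: "('s, 'q) nfa"
  assumes "wf_nfa A"
  shows "lang (Sat A (S_rel A (bw_incl A) (converse (bw_incl A)))) = lang A"
proof
  show "lang (Sat A (S_rel A (bw_incl A) (converse (bw_incl A)))) \<subseteq> lang A"
    by (rule lang_Sat_subset) simp_all
  have "refl_on (Delta A) (S_rel A (bw_incl A) (converse (bw_incl A)))"
    by (rule refl_on_S_rel) (simp_all add: refl_on_bw_incl)
  moreover have "trans A \<subseteq> Delta A"
    using assms unfolding wf_nfa_def Delta_def by blast
  ultimately show "lang A \<subseteq> lang (Sat A (S_rel A (bw_incl A) (converse (bw_incl A))))"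
    by (rule lang_subset_Sat[rotated])
qed

end
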